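(* Take $\Omega=D=\mathbb{C}\setminus\{0,-1,-2,\dots\}$. For every $\delta>0$ there exists a Lebesgue measurable set $S\subseteq D$ with two-dimensional Lebesgue measure $\lambda(S)<\delta$ such that $\mathrm{Cl}_D(S)=D$.
   Context: Let $\Omega$ be either $(0,\infty)$ or $D=\mathbb{C}\setminus\{0,-1,-2,\dots\}$. An admissible instance (relative to $\Omega$) is one of the following finite lists of points, all entries of which are required to lie in $\Omega$: (i) $(z+1,\,z)$ for $z\in\Omega$ with $z+1\in\Omega$ (corresponding to the identity $\Gamma(z+1)=z\Gamma(z)$); (ii) $(z,\,1-z)$ for $z\in\Omega\setminus\mathbb{Z}$ with $1-z\in\Omega$ (corresponding to $\Gamma(z)\Gamma(1-z)=\pi/\sin(\pi z)$); (iii) for an integer $n\ge 2$, $\big(z,\,\tfrac{z}{n},\,\tfrac{z+1}{n},\dots,\tfrac{z+n-1}{n}\big)$ (corresponding to Gauss's multiplication formula $(2\pi)^{(n-1)/2}n^{1/2-z}\Gamma(z)=\prod_{j=0}^{n-1}\Gamma(\tfrac{z+j}{n})$). For $B\subseteq\Omega$, a point $p\in\Omega$ is obtained from $B$ in one step if there is an admissible instance in which $p$ occurs exactly once as an entry and every other entry lies in $B$. Set $B_0=B$, $B_{i+1}=B_i\cup\{p: p \text{ obtained from } B_i \text{ in one step}\}$, and $\mathrm{Cl}_\Omega(B)=\bigcup_{i\ge0}B_i$ (the set of points at which the value of $\Gamma$ is determined by its values on $B$ via finitely many applications of the identities). For $A,B\subseteq\Omega$ write $A\preceq B$ if $A\subseteq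 \mathrm{Cl}_\Omega(B)$. A set $S\subseteq\Omega$ is a fundamental set (for $\Gamma$ on $\Omega$) if $\mathrm{Cl}_\Omega(S)=\Omega$. *)

theory Defs
  imports "HOL-Analysis.Analysis"
begin

definition gammaD :: "complex set" where
  "gammaD = UNIV - {z. \<exists>n::nat. z = - of_nat n}"

definition admissible :: "complex set \<Rightarrow> complex list \<Rightarrow> bool" where
  "admissible \<Omega> xs \<longleftrightarrow> set xs \<subseteq> \<Omega> \<and>
     ((\<exists>z. xs = [z + 1, z]) \<or>
      (\<exists>z. z \<notin> \<int> \<and> xs = [z, 1 - z]) \<or>
      (\<exists>z (n::nat). n \<ge> 2 \<and> xs = z # map (\<lambda>j. (z + of_nat j) / of_nat n) [0..<n]))"

definition one_step :: "complex set \<Rightarrow> complex set \<Rightarrow> complex \<Rightarrow> bool" where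
  "one_step \<Omega> B p \<longleftrightarrow> p \<in> \<Omega> \<and>
     (\<exists>xs. admissible \<Omega> xs \<and> count_list xs p = 1 \<and> (\<forall>q\<in>set xs. q \<noteq> p \<longrightarrow> q \<in> B))"

definition step_set :: "complex set \<Rightarrow> complex set \<Rightarrow> complex set" where
  "step_set \<Omega> B = B \<union> {p. one_step \<Omega> B p}"

definition Cl :: "complex set \<Rightarrow> complex set \<Rightarrow> complex set" where
  "Cl \<Omega> B = (\<Union>i. (step_set \<Omega> ^^ i) B)"

end

theory Submission
  imports Defs
begin

text \<open>
  The closure of the thin rectangle \<open>S = (0,2) \<times> (-\<epsilon>,\<epsilon>)\<close> is all of \<open>D\<close>.
  Translating by integers with \<open>\<Gamma>(z+1) = z\<Gamma>(z)\<close> fills the strip \<open>|Im z| < \<epsilon>\<close>.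
  For non-real \<open>z\<close>, the duplication formula determines \<open>\<Gamma>(z)\<close> from \<open>\<Gamma>(z/2)\<close> and
  \<open>\<Gamma>((z+1)/2)\<close>, whose imaginary parts are halved; so by induction the strip
  \<open>|Im z| < 2\<^sup>k\<epsilon>\<close> is filled for every \<open>k\<close>. The measure of \<open>S\<close> is \<open>4\<epsilon>\<close>.
\<close>

lemma step_set_funpow_mono:
  assumes "i \<le> j"
  shows "(step_set \<Omega> ^^ i) B \<subseteq> (step_set \<Omega> ^^ j) B"
  using assms
proof (induction rule: dec_induct)
  case base
  then show ?case by simp
next
  case (step n)
  then show ?case by (auto simp: step_set_def)
qed

lemma finite_subset_Cl_imp_stage:
  assumes "finite F" "F \<subseteq> Cl \<Omega> B"
  shows "\<exists>i. F \<subseteq> (step_set \<Omega> ^^ i) B"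
  using assms
proof (induction F rule: finite_induct)
  case empty
  then show ?case by simp
next
  case (insert x F)
  then obtain i where i: "F \<subseteq> (step_set \<Omega> ^^ i) B" by auto
  from insert obtain k where k: "x \<in> (step_set \<Omega> ^^ k) B" by (auto simp: Cl_def)
  have "insert x F \<subseteq> (step_set \<Omega> ^^ max i k) B"
    using i k step_set_funpow_mono[of i "max i k" \<Omega> B] step_set_funpow_mono[of k "max i k" \<Omega> B]
    by auto
  then show ?case by blast
qed

lemma one_step_Cl_imp_mem_Cl:
  assumes "one_step \<Omega> (Cl \<Omega> B) p"
  shows "p \<in> Cl \<Omega> B"
proof -
  from assms obtain xs where xs: "admissible \<Omega> xs" "count_list xs p = 1"
    "\<forall>q\<in>set xs. q \<noteq> p \<longrightarrow> q \<in> Cl \<Omega> B" and p: "p \<in> \<Omega>"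
    unfolding one_step_def by blast
  obtain i where i: "set xs - {p} \<subseteq> (step_set \<Omega> ^^ i) B"
    using finite_subset_Cl_imp_stage[of "set xs - {p}" \<Omega> B] xs(3) by auto
  have "one_step \<Omega> ((step_set \<Omega> ^^ i) B) p"
    unfolding one_step_def using xs p i by blast
  then have "p \<in> (step_set \<Omega> ^^ Suc i) B" by (simp add: step_set_def)
  then show ?thesis unfolding Cl_def by blast
qed

lemma Cl_subset:
  assumes "B \<subseteq> \<Omega>"
  shows "Cl \<Omega> B \<subseteq> \<Omega>"
proof -
  have "(step_set \<Omega> ^^ i) B \<subseteq> \<Omega>" for i
    by (induction i) (use assms in \<open>auto simp: step_set_def one_step_def\<close>)
  then show ?thesis unfolding Cl_def by blast
qed

lemma subset_Cl: "B \<subseteq> Cl \<Omega> B"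
  unfolding Cl_def by (metis UN_upper UNIV_I funpow_0)

lemma gammaD_iff: "z \<in> gammaD \<longleftrightarrow> (\<forall>n::nat. z \<noteq> - of_nat n)"
  by (auto simp: gammaD_def)

lemma gammaD_add_one: "z \<in> gammaD \<Longrightarrow> z + 1 \<in> gammaD"
  unfolding gammaD_iff
  by (metis add.inverse_distrib_swap add_diff_cancel_right' diff_minus_eq_add of_nat_Suc)

lemma Im_nonzero_imp_gammaD: "Im z \<noteq> 0 \<Longrightarrow> z \<in> gammaD"
  by (auto simp: gammaD_iff)

lemma Re_pos_imp_gammaD: "Re z > 0 \<Longrightarrow> z \<in> gammaD"
  by (auto simp: gammaD_iff)

lemma admissible_shift: "set [z + 1, z] \<subseteq> \<Omega> \<Longrightarrow> admissible \<Omega> [z + 1, z]"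
  unfolding admissible_def by (intro conjI disjI1 exI[of _ z]) simp_all

lemma admissible_duplication:
  assumes "set [z, z / 2, (z + 1) / 2] \<subseteq> \<Omega>"
  shows "admissible \<Omega> [z, z / 2, (z + 1) / 2]"
proof -
  have "[z, z / 2, (z + 1) / 2] = z # map (\<lambda>j. (z + of_nat j) / of_nat 2) [0..<2]"
    by (simp add: numeral_2_eq_2)
  then show ?thesis
    unfolding admissible_def
    by (intro conjI assms disjI2 exI[of _ z] exI[of _ "2::nat"]) simp_all
qed

lemma Cl_gammaD_add_one:
  assumes "z \<in> Cl gammaD B" "B \<subseteq> gammaD"
  shows "z + 1 \<in> Cl gammaD B"
proof (rule one_step_Cl_imp_mem_Cl)
  have "z \<in> gammaD" using assms Cl_subset by blast
  then show "one_step gammaD (Cl gammaD B) (z + 1)"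
    unfolding one_step_def using assms(1) gammaD_add_one
    by (auto intro!: exI[of _ "[z + 1, z]"] admissible_shift)
qed

lemma Cl_gammaD_diff_one:
  assumes "z + 1 \<in> Cl gammaD B" "z \<in> gammaD"
  shows "z \<in> Cl gammaD B"
proof (rule one_step_Cl_imp_mem_Cl)
  show "one_step gammaD (Cl gammaD B) z"
    unfolding one_step_def using assms gammaD_add_one
    by (auto intro!: exI[of _ "[z + 1, z]"] admissible_shift)
qed

lemma Cl_gammaD_add_nat:
  assumes "z \<in> Cl gammaD B" "B \<subseteq> gammaD"
  shows "z + of_nat n \<in> Cl gammaD B"
proof (induction n)
  case 0
  then show ?case using assms(1) by simp
next
  case (Suc n)
  have "z + of_nat (Suc n) = (z + of_nat n) + 1" by simp
  then show ?case using Cl_gammaD_add_one[OF Suc assms(2)] by argo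
qed

lemma Cl_gammaD_diff_nat:
  assumes "z + of_nat n \<in> Cl gammaD B" "z \<in> gammaD"
  shows "z \<in> Cl gammaD B"
  using assms
proof (induction n arbitrary: z)
  case 0
  then show ?case by simp
next
  case (Suc n)
  have "(z + 1) + of_nat n = z + of_nat (Suc n)" by simp
  then have "z + 1 \<in> Cl gammaD B"
    using Suc.IH[of "z + 1"] Suc.prems gammaD_add_one by metis
  then show ?case using Cl_gammaD_diff_one Suc.prems(2) by blast
qed

text \<open>Legendre's duplication formula (Gauss with \<open>n = 2\<close>); \<open>Im z \<noteq> 0\<close> keeps \<open>z/2\<close> and
  \<open>(z+1)/2\<close> away from the poles.\<close>
lemma Cl_gammaD_duplication:
  assumes "z / 2 \<in> Cl gammaD B" "(z + 1) / 2 \<in> Cl gammaD B" "Im z \<noteq> 0"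
  shows "z \<in> Cl gammaD B"
proof (rule one_step_Cl_imp_mem_Cl)
  have distinct: "z \<noteq> z / 2" "z \<noteq> (z + 1) / 2"
    using assms(3) by (auto simp: complex_eq_iff)
  have in_D: "set [z, z / 2, (z + 1) / 2] \<subseteq> gammaD"
    using assms(3) by (auto intro: Im_nonzero_imp_gammaD)
  show "one_step gammaD (Cl gammaD B) z"
    unfolding one_step_def
  proof (intro conjI exI[of _ "[z, z / 2, (z + 1) / 2]"])
    show "z \<in> gammaD" using in_D by simp
    show "admissible gammaD [z, z / 2, (z + 1) / 2]" using in_D by (rule admissible_duplication)
    show "count_list [z, z / 2, (z + 1) / 2] z = 1" using distinct by simp
    show "\<forall>q\<in>set [z, z / 2, (z + 1) / 2]. q \<noteq> z \<longrightarrow> q \<in> Cl gammaD B"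
      using assms(1,2) by (simp only: list.set ball_simps) blast
  qed
qed

lemma Cl_gammaD_strip:
  assumes "B \<subseteq> gammaD" and unit_strip: "{w. 0 < Re w \<and> Re w \<le> 1 \<and> \<bar>Im w\<bar> < e} \<subseteq> B"
    and z: "z \<in> gammaD" "\<bar>Im z\<bar> < e"
  shows "z \<in> Cl gammaD B"
proof -
  define m where "m = \<lceil>Re z\<rceil> - 1"
  define w where "w = z - of_int m"
  have "0 < Re w" "Re w \<le> 1" "Im w = Im z"
    unfolding w_def m_def by (simp_all, linarith+)
  then have "w \<in> Cl gammaD B" using unit_strip z subset_Cl by fastforce
  show ?thesis
  proof (cases "m \<ge> 0")
    case True
    then have "z = w + of_nat (nat m)" by (simp add: w_def)
    then show ?thesis using Cl_gammaD_add_nat[OF \<open>w \<in> Cl gammaD B\<close> assms(1)] by metis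
  next
    case False
    then have "z + of_nat (nat (- m)) = w" by (simp add: w_def)
    then show ?thesis using Cl_gammaD_diff_nat z(1) \<open>w \<in> Cl gammaD B\<close> by metis
  qed
qed

lemma Cl_gammaD_eq_if_strip:
  assumes "B \<subseteq> gammaD" "{w. 0 < Re w \<and> Re w \<le> 1 \<and> \<bar>Im w\<bar> < e} \<subseteq> B" "e > 0"
  shows "Cl gammaD B = gammaD"
proof
  have wide_strip: "z \<in> Cl gammaD B" if "z \<in> gammaD" "\<bar>Im z\<bar> < 2 ^ k * e" for k z
    using that
  proof (induction k arbitrary: z)
    case 0
    then show ?case using Cl_gammaD_strip[OF assms(1,2)] by simp
  next
    case (Suc k)
    show ?case
    proof (cases "Im z = 0")
      case True
      then show ?thesis using Cl_gammaD_strip[OF assms(1,2)] Suc.prems(1) assms(3) by simp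
    next
      case False
      then have "z / 2 \<in> Cl gammaD B" "(z + 1) / 2 \<in> Cl gammaD B"
        using Suc.IH Suc.prems(2) Im_nonzero_imp_gammaD by simp_all
      then show ?thesis using Cl_gammaD_duplication False by blast
    qed
  qed
  show "gammaD \<subseteq> Cl gammaD B"
  proof
    fix z assume "z \<in> gammaD"
    obtain k where "\<bar>Im z\<bar> / e < 2 ^ k" using real_arch_pow[of 2 "\<bar>Im z\<bar> / e"] by auto
    then have "\<bar>Im z\<bar> < 2 ^ k * e" using assms(3) by (simp add: field_simps)
    then show "z \<in> Cl gammaD B" using wide_strip \<open>z \<in> gammaD\<close> by blast
  qed
qed (rule Cl_subset[OF assms(1)])

theorem mainTheorem10:
  fixes \<delta> :: real
  assumes "\<delta> > 0"
  shows "\<exists>S. S \<in> sets lebesgue \<and> S \<subseteq> gammaD \<and> emeasure lebesgue S < ennreal \<delta>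
             \<and> Cl gammaD S = gammaD"
proof -
  define e where "e = \<delta> / 8"
  have "e > 0" using assms by (simp add: e_def)
  define S where "S = box (Complex 0 (- e)) (Complex 2 e)"
  have mem_S: "z \<in> S \<longleftrightarrow> 0 < Re z \<and> Re z < 2 \<and> \<bar>Im z\<bar> < e" for z
    by (auto simp: S_def mem_box Basis_complex_def)
  have "S \<subseteq> gammaD" using mem_S Re_pos_imp_gammaD by blast
  moreover have "Cl gammaD S = gammaD"
    using Cl_gammaD_eq_if_strip[OF \<open>S \<subseteq> gammaD\<close> _ \<open>e > 0\<close>] mem_S by fastforce
  moreover have "emeasure lebesgue S = ennreal (4 * e)"
    using \<open>e > 0\<close> by (simp add: S_def emeasure_lborel_box_eq Basis_complex_def)
  then have "emeasure lebesgue S < ennreal \<delta>"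
    using \<open>e > 0\<close> by (simp add: e_def ennreal_lessI)
  moreover have "S \<in> sets lebesgue" by (simp add: S_def)
  ultimately show ?thesis by blast
qed

end
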